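(* Let $p\ge7$ be prime, let $L/K$ be a finite cyclic Galois extension of number fields, and let $\overline r:G_L\to\mathrm{PGL}_2(\mathbb{F}_p)$ be a continuous homomorphism with cyclotomic determinant. Then $\overline r$ extends to a homomorphism $\overline R:G_K\to\mathrm{PGL}_2(\mathbb{F}_p)$ (i.e. $\overline R|_{G_L}=\overline r$) if and only if $\overline r$ is compatible with $L/K$. Moreover, $\overline r$ admits such an extension $\overline R$ with cyclotomic determinant if and only if $\overline r$ is strongly compatible with $L/K$.
   Context: $G_K=\mathrm{Gal}(\overline{\mathbb{Q}}/K)$. Let $\overline\varepsilon_p^{\mathrm{pr}}:G_{\mathbb{Q}}\to\mathbb{F}_p^\times/\mathbb{F}_p^{\times2}$ be the mod-$p$ cyclotomic character composed with the quotient map; determinants on $\mathrm{PGL}_2(\mathbb{F}_p)$ take values in $\mathbb{F}_p^\times/\mathbb{F}_p^{\times2}$. A homomorphism $\overline\rho:G_L\to\mathrm{PGL}_2(\mathbb{F}_p)$ has cyclotomic determinant if $\det\overline\rho(\sigma)=\overline\varepsilon_p^{\mathrm{pr}}(\sigma)$ for all $\sigma$. For $K\subseteq L$, $\overline\rho$ is invariant with respect to $L/K$ if for every $\tau\in G_K$ there is $g_\tau\in\mathrm{PGL}_2(\mathbb{F}_p)$ with $\overline\rho(\tau\sigma\tau^{-1})=g_\tau\overline\rho(\sigma)g_\tau^{-1}$ for all $\sigma\in G_L$; strongly invariant if moreover the $g_\tau$ can be chosen with $\det g_\tau=\overline\varepsilon_p^{\mathrm{pr}}(\tau)$. It is (strongly)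 compatible with $L/K$ if it is (strongly) invariant with the $g_\tau$ additionally satisfying $\overline\rho(\tau^{d})=g_\tau^{d}$ for all $\tau\in G_K$, where $d=d_\tau$ is the least positive integer with $\tau^d\in G_L$. *)

theory Defs
  imports "HOL-Algebra.Algebraic_Closure_Type" "HOL-Algebra.Group" "HOL-Number_Theory.Number_Theory"
begin

type_synonym qbar = "rat alg_closure"

definition is_subfield :: "qbar set \<Rightarrow> bool" where
  "is_subfield K \<longleftrightarrow> 0 \<in> K \<and> 1 \<in> K \<and> (\<forall>x\<in>K. \<forall>y\<in>K. x + y \<in> K \<and> x * y \<in> K)
     \<and> (\<forall>x\<in>K. - x \<in> K \<and> inverse x \<in> K)"

definition number_field :: "qbar set \<Rightarrow> bool" where
  "number_field K \<longleftrightarrow> is_subfield K \<and>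
     (\<exists>B. finite B \<and> B \<subseteq> K \<and> (\<forall>x\<in>K. \<exists>c::qbar \<Rightarrow> rat. x = (\<Sum>b\<in>B. of_rat (c b) * b)))"

definition field_aut :: "(qbar \<Rightarrow> qbar) \<Rightarrow> bool" where
  "field_aut \<sigma> \<longleftrightarrow> bij \<sigma> \<and> (\<forall>x y. \<sigma> (x + y) = \<sigma> x + \<sigma> y) \<and>
     (\<forall>x y. \<sigma> (x * y) = \<sigma> x * \<sigma> y) \<and> \<sigma> 1 = 1"

definition absGal :: "qbar set \<Rightarrow> (qbar \<Rightarrow> qbar) set" where
  "absGal K = {\<sigma>. field_aut \<sigma> \<and> (\<forall>x\<in>K. \<sigma> x = x)}"

definition GalGrp :: "qbar set \<Rightarrow> (qbar \<Rightarrow> qbar) monoid" where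
  "GalGrp K = \<lparr>carrier = absGal K, monoid.mult = (\<circ>), one = id\<rparr>"

definition cyclic_galois_ext :: "qbar set \<Rightarrow> qbar set \<Rightarrow> bool" where
  "cyclic_galois_ext L K \<longleftrightarrow> number_field K \<and> number_field L \<and> K \<subseteq> L \<and>
     (\<forall>\<sigma>\<in>absGal K. \<sigma> ` L = L) \<and>
     (\<exists>\<tau>0\<in>absGal K. \<forall>\<sigma>\<in>absGal K. \<exists>n. \<forall>x\<in>L. \<sigma> x = (\<tau>0 ^^ n) x)"

text \<open>PGL_2(F_p): 2x2 matrices (a,b,c,d) = [[a,b],[c,d]] with entries in {0..<p},
  invertible mod p, modulo nonzero scalars; elements are the scalar classes.\<close>
type_synonym mat2 = "int \<times> int \<times> int \<times> int"

definition mdet :: "mat2 \<Rightarrow> int" where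
  "mdet A = (case A of (a,b,c,d) \<Rightarrow> a * d - b * c)"

definition mmul :: "nat \<Rightarrow> mat2 \<Rightarrow> mat2 \<Rightarrow> mat2" where
  "mmul p A B = (case A of (a,b,c,d) \<Rightarrow> case B of (e,f,g,h) \<Rightarrow>
     ((a*e + b*g) mod int p, (a*f + b*h) mod int p, (c*e + d*g) mod int p, (c*f + d*h) mod int p))"

definition msmul :: "nat \<Rightarrow> int \<Rightarrow> mat2 \<Rightarrow> mat2" where
  "msmul p l A = (case A of (a,b,c,d) \<Rightarrow>
     ((l*a) mod int p, (l*b) mod int p, (l*c) mod int p, (l*d) mod int p))"

definition gl2 :: "nat \<Rightarrow> mat2 set" where
  "gl2 p = {(a,b,c,d). a \<in> {0..<int p} \<and> b \<in> {0..<int p} \<and> c \<in> {0..<int p} \<and> d \<in> {0..<int p}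
              \<and> \<not> int p dvd (a*d - b*c)}"

definition pcls :: "nat \<Rightarrow> mat2 \<Rightarrow> mat2 set" where
  "pcls p A = {B \<in> gl2 p. \<exists>l. \<not> int p dvd l \<and> B = msmul p l A}"

definition PGL2 :: "nat \<Rightarrow> mat2 set monoid" where
  "PGL2 p = \<lparr>carrier = pcls p ` gl2 p,
     monoid.mult = (\<lambda>U V. pcls p (mmul p (SOME M1. M1 \<in> U) (SOME M2. M2 \<in> V))),
     one = pcls p (1, 0, 0, 1)\<rparr>"

text \<open>Determinant PGL_2(F_p) \<rightarrow> F_p^*/F_p^*2, the latter identified with {1,-1}
  via the Legendre symbol.\<close>
definition pdet :: "nat \<Rightarrow> mat2 set \<Rightarrow> int" where
  "pdet p U = Legendre (mdet (SOME M. M \<in> U)) (int p)"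

text \<open>Mod-p cyclotomic character composed with F_p^* \<rightarrow> F_p^*/F_p^*2:
  \<sigma>(\<zeta>) = \<zeta>^a for all p-th roots of unity \<zeta>.\<close>
definition cyc_pr :: "nat \<Rightarrow> (qbar \<Rightarrow> qbar) \<Rightarrow> int" where
  "cyc_pr p \<sigma> = Legendre (int (SOME a::nat. \<forall>\<zeta>::qbar. \<zeta> ^ p = 1 \<longrightarrow> \<sigma> \<zeta> = \<zeta> ^ a)) (int p)"

definition cyc_det :: "nat \<Rightarrow> qbar set \<Rightarrow> ((qbar \<Rightarrow> qbar) \<Rightarrow> mat2 set) \<Rightarrow> bool" where
  "cyc_det p L r \<longleftrightarrow> (\<forall>\<sigma>\<in>absGal L. pdet p (r \<sigma>) = cyc_pr p \<sigma>)"

text \<open>Continuity for the Krull topology on G_L and the discrete topology on PGL_2(F_p):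
  the kernel contains an open subgroup G_M, M a number field containing L.\<close>
definition galois_continuous :: "nat \<Rightarrow> qbar set \<Rightarrow> ((qbar \<Rightarrow> qbar) \<Rightarrow> mat2 set) \<Rightarrow> bool" where
  "galois_continuous p L r \<longleftrightarrow>
     (\<exists>M. number_field M \<and> L \<subseteq> M \<and> (\<forall>\<sigma>\<in>absGal M. r \<sigma> = \<one>\<^bsub>PGL2 p\<^esub>))"

definition dtau :: "qbar set \<Rightarrow> (qbar \<Rightarrow> qbar) \<Rightarrow> nat" where
  "dtau L \<tau> = (LEAST d. 0 < d \<and> \<tau> ^^ d \<in> absGal L)"

definition invariant_wrt :: "nat \<Rightarrow> qbar set \<Rightarrow> qbar set \<Rightarrow> ((qbar \<Rightarrow> qbar) \<Rightarrow> mat2 set) \<Rightarrow> bool" where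
  "invariant_wrt p L K r \<longleftrightarrow> (\<forall>\<tau>\<in>absGal K. \<exists>g\<in>carrier (PGL2 p). \<forall>\<sigma>\<in>absGal L.
      r (\<tau> \<circ> \<sigma> \<circ> inv_into UNIV \<tau>) = g \<otimes>\<^bsub>PGL2 p\<^esub> r \<sigma> \<otimes>\<^bsub>PGL2 p\<^esub> inv\<^bsub>PGL2 p\<^esub> g)"

definition compatible_wrt :: "nat \<Rightarrow> qbar set \<Rightarrow> qbar set \<Rightarrow> ((qbar \<Rightarrow> qbar) \<Rightarrow> mat2 set) \<Rightarrow> bool" where
  "compatible_wrt p L K r \<longleftrightarrow> (\<forall>\<tau>\<in>absGal K. \<exists>g\<in>carrier (PGL2 p).
      (\<forall>\<sigma>\<in>absGal L. r (\<tau> \<circ> \<sigma> \<circ> inv_into UNIV \<tau>) = g \<otimes>\<^bsub>PGL2 p\<^esub> r \<sigma> \<otimes>\<^bsub>PGL2 p\<^esub> inv\<^bsub>PGL2 p\<^esub> g)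
      \<and> r (\<tau> ^^ dtau L \<tau>) = g [^]\<^bsub>PGL2 p\<^esub> dtau L \<tau>)"

definition strongly_compatible_wrt :: "nat \<Rightarrow> qbar set \<Rightarrow> qbar set \<Rightarrow> ((qbar \<Rightarrow> qbar) \<Rightarrow> mat2 set) \<Rightarrow> bool" where
  "strongly_compatible_wrt p L K r \<longleftrightarrow> (\<forall>\<tau>\<in>absGal K. \<exists>g\<in>carrier (PGL2 p).
      (\<forall>\<sigma>\<in>absGal L. r (\<tau> \<circ> \<sigma> \<circ> inv_into UNIV \<tau>) = g \<otimes>\<^bsub>PGL2 p\<^esub> r \<sigma> \<otimes>\<^bsub>PGL2 p\<^esub> inv\<^bsub>PGL2 p\<^esub> g)
      \<and> pdet p g = cyc_pr p \<tau>
      \<and> r (\<tau> ^^ dtau L \<tau>) = g [^]\<^bsub>PGL2 p\<^esub> dtau L \<tau>)"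

end

theory Submission
  imports Defs
begin

text \<open>
  Let \<open>H = G_L\<close>, a normal subgroup of \<open>G = G_K\<close> with \<open>G = \<Union>\<^sub>n t\<^sup>n H\<close> for a lift \<open>t\<close> of a
  generator of \<open>Gal(L/K)\<close>. Restricting a homomorphism \<open>R\<close> on \<open>G\<close> to \<open>H\<close> yields compatibility with
  \<open>g\<^sub>\<tau> = R \<tau>\<close>. Conversely, given \<open>g\<close> compatible at \<open>t\<close>, put \<open>R (t\<^sup>n h) = g\<^sup>n r h\<close>: two
  decompositions of one element differ by a power \<open>t\<^sup>k \<in> H\<close>, and \<open>k\<close> is a multiple of the least
  such exponent \<open>d\<close>, so \<open>r (t\<^sup>k) = g\<^sup>k\<close> follows from \<open>r (t\<^sup>d) = g\<^sup>d\<close>; multiplicativity follows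
  from \<open>r (t h t\<^sup>-\<^sup>1) = g r(h) g\<^sup>-\<^sup>1\<close>. The determinant and the cyclotomic character are both
  multiplicative, so if they agree on \<open>H\<close> and at \<open>t\<close> they agree on \<open>G\<close>.
\<close>

section \<open>Extending homomorphisms across a cyclic quotient\<close>

text \<open>\<open>ord_mod G H x\<close> is the order of \<open>xH\<close> in \<open>G/H\<close>, i.e.\ the paper's \<open>d\<^sub>\<tau>\<close>.\<close>
definition ord_mod :: "('a, 'b) monoid_scheme \<Rightarrow> 'a set \<Rightarrow> 'a \<Rightarrow> nat" where
  "ord_mod G H x = (LEAST d. 0 < d \<and> x [^]\<^bsub>G\<^esub> d \<in> H)"

definition compatible_at ::
    "('a, 'c) monoid_scheme \<Rightarrow> 'a set \<Rightarrow> ('b, 'd) monoid_scheme \<Rightarrow> ('a \<Rightarrow> 'b) \<Rightarrow> 'a \<Rightarrow> 'b \<Rightarrow> bool" where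
  "compatible_at G H P r x g \<longleftrightarrow> g \<in> carrier P
     \<and> (\<forall>h\<in>H. r (x \<otimes>\<^bsub>G\<^esub> h \<otimes>\<^bsub>G\<^esub> inv\<^bsub>G\<^esub> x) = g \<otimes>\<^bsub>P\<^esub> r h \<otimes>\<^bsub>P\<^esub> inv\<^bsub>P\<^esub> g)
     \<and> r (x [^]\<^bsub>G\<^esub> ord_mod G H x) = g [^]\<^bsub>P\<^esub> ord_mod G H x"

lemma nat_pow_carrier_update [simp]: "x [^]\<^bsub>G\<lparr>carrier := H\<rparr>\<^esub> (n::nat) = x [^]\<^bsub>G\<^esub> n"
  by (simp add: nat_pow_def)

lemma (in subgroup) hom_restrict_group_hom:
  assumes "group G" "group P" "r \<in> hom (G\<lparr>carrier := H\<rparr>) P"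
  shows "group_hom (G\<lparr>carrier := H\<rparr>) P r"
  using assms subgroup_axioms by (intro group_hom.intro group_hom_axioms.intro group.subgroup_imp_group)

lemma (in group) subgroup_nat_pow_closed: "subgroup H G \<Longrightarrow> h \<in> H \<Longrightarrow> h [^] (n::nat) \<in> H"
  by (induction n) (simp_all add: subgroup.one_closed subgroup.m_closed)

lemma ord_mod:
  assumes "0 < (D::nat)" "x [^]\<^bsub>G\<^esub> D \<in> H"
  shows ord_mod_pos: "0 < ord_mod G H x" and pow_ord_mod_mem: "x [^]\<^bsub>G\<^esub> ord_mod G H x \<in> H"
  using LeastI[of "\<lambda>d. 0 < d \<and> x [^]\<^bsub>G\<^esub> d \<in> H", OF conjI[OF assms]] by (simp_all add: ord_mod_def)

lemma (in group) ord_mod_dvd: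
  assumes H: "subgroup H G" and x: "x \<in> carrier G"
    and D: "0 < (D::nat)" "x [^] D \<in> H" and k: "x [^] (k::nat) \<in> H"
  shows "ord_mod G H x dvd k"
proof -
  let ?d = "ord_mod G H x"
  have "x [^] k = (x [^] ?d) [^] (k div ?d) \<otimes> x [^] (k mod ?d)"
    using x by (simp add: nat_pow_pow nat_pow_mult)
  hence "x [^] (k mod ?d) = inv ((x [^] ?d) [^] (k div ?d)) \<otimes> x [^] k"
    using x by (simp add: inv_solve_left)
  hence "x [^] (k mod ?d) \<in> H"
    using pow_ord_mod_mem[OF D] k H
    by (simp add: subgroup.m_closed subgroup.m_inv_closed subgroup_nat_pow_closed)
  hence "k mod ?d = 0"
    using not_less_Least[of "k mod ?d" "\<lambda>d. 0 < d \<and> x [^] d \<in> H"] ord_mod_pos[OF D]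
    by (fastforce simp: ord_mod_def)
  thus ?thesis by auto
qed

lemma (in group) hom_pow_eq_if_pow_ord_mod_eq:
  assumes H: "subgroup H G" and P: "group P" and r: "r \<in> hom (G\<lparr>carrier := H\<rparr>) P"
    and x: "x \<in> carrier G" and D: "0 < (D::nat)" "x [^] D \<in> H"
    and g: "g \<in> carrier P" and rd: "r (x [^] ord_mod G H x) = g [^]\<^bsub>P\<^esub> ord_mod G H x"
    and k: "x [^] (k::nat) \<in> H"
  shows "r (x [^] k) = g [^]\<^bsub>P\<^esub> k"
proof -
  interpret r: group_hom "G\<lparr>carrier := H\<rparr>" P r
    using subgroup.hom_restrict_group_hom[OF H is_group P r] .
  obtain q where q: "k = ord_mod G H x * q" using ord_mod_dvd[OF H x D k] by blast
  have "r (x [^] k) = r ((x [^] ord_mod G H x) [^] q)" using x by (simp add: q nat_pow_pow)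
  also have "\<dots> = (g [^]\<^bsub>P\<^esub> ord_mod G H x) [^]\<^bsub>P\<^esub> q"
    using r.hom_nat_pow[of "x [^] ord_mod G H x" q] pow_ord_mod_mem[OF D] rd by simp
  also have "\<dots> = g [^]\<^bsub>P\<^esub> k" using g by (simp add: q group.is_monoid[OF P] monoid.nat_pow_pow)
  finally show ?thesis .
qed

lemma (in group) mult_inv_cancel_left: "x \<in> carrier G \<Longrightarrow> y \<in> carrier G \<Longrightarrow> x \<otimes> (inv x \<otimes> y) = y"
  by (simp add: m_assoc[symmetric])

lemma (in group) inv_mult_cancel_left: "x \<in> carrier G \<Longrightarrow> y \<in> carrier G \<Longrightarrow> inv x \<otimes> (x \<otimes> y) = y"
  by (simp add: m_assoc[symmetric])

lemma (in normal) pow_coset_normal: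
  assumes y: "y \<in> carrier G" and h: "h \<in> H"
  shows "\<exists>h'\<in>H. (y \<otimes> h) [^] (n::nat) = y [^] n \<otimes> h'"
proof (induction n)
  case 0 show ?case using one_closed by (intro bexI[of _ \<one>]) simp_all
next
  case (Suc n)
  then obtain h' where h': "h' \<in> H" "(y \<otimes> h) [^] n = y [^] n \<otimes> h'" by blast
  have "(y \<otimes> h) [^] Suc n = y [^] Suc n \<otimes> (inv y \<otimes> h' \<otimes> y \<otimes> h)"
    using y mem_carrier[OF h'(1)] mem_carrier[OF h] h'(2)
    by (simp add: m_assoc nat_pow_Suc2 del: nat_pow_Suc) (simp add: m_assoc[symmetric])
  moreover have "inv y \<otimes> h' \<otimes> y \<otimes> h \<in> H" using inv_op_closed1[OF y h'(1)] h by simp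
  ultimately show ?case by blast
qed

locale cyclic_extension = normal +
  fixes t
  assumes generator_closed: "t \<in> carrier G"
    and coset_decomposition: "x \<in> carrier G \<Longrightarrow> \<exists>n::nat. \<exists>h\<in>H. x = t [^] n \<otimes> h"
begin

lemma generator_pow_mem: "\<exists>n::nat. 0 < n \<and> t [^] n \<in> H"
proof -
  obtain n :: nat and h where h: "h \<in> H" "inv t = t [^] n \<otimes> h"
    using coset_decomposition[of "inv t"] generator_closed by blast
  have "t [^] Suc n = inv h"
    using generator_closed mem_carrier[OF h(1)] h(2)
    by (metis inv_equality m_assoc m_closed nat_pow_Suc2 nat_pow_closed r_inv inv_closed)
  thus ?thesis using m_inv_closed[OF h(1)] by (intro exI[of _ "Suc n"]) simp
qed

lemma pow_mem: assumes x: "x \<in> carrier G" shows "\<exists>D::nat. 0 < D \<and> x [^] D \<in> H"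
proof -
  obtain N :: nat where N: "0 < N" "t [^] N \<in> H" using generator_pow_mem by blast
  obtain k :: nat and h where h: "h \<in> H" "x = t [^] k \<otimes> h" using coset_decomposition[OF x] by blast
  obtain h' where h': "h' \<in> H" "x [^] N = (t [^] k) [^] N \<otimes> h'"
    using pow_coset_normal[OF _ h(1), of "t [^] k" N] generator_closed h(2) by auto
  have "(t [^] k) [^] N = (t [^] N) [^] k" using generator_closed by (simp add: nat_pow_pow mult.commute)
  hence "x [^] N \<in> H" using h' N(2) by (simp add: m_closed subgroup_nat_pow_closed subgroup_axioms)
  thus ?thesis using N(1) by blast
qed

lemma restriction_compatible_at:
  assumes P: "group P" and R: "R \<in> hom G P" and x: "x \<in> carrier G" and r: "\<forall>h\<in>H. R h = r h"
  shows "compatible_at G H P r x (R x)"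
proof -
  interpret R: group_hom G P R using P R by (intro group_hom.intro group_hom_axioms.intro is_group)
  obtain D :: nat where D: "0 < D" "x [^] D \<in> H" using pow_mem[OF x] by blast
  have "R (x \<otimes> h \<otimes> inv x) = R x \<otimes>\<^bsub>P\<^esub> R h \<otimes>\<^bsub>P\<^esub> inv\<^bsub>P\<^esub> R x" if "h \<in> H" for h
    using x mem_carrier[OF that] by simp
  moreover have "R (x [^] ord_mod G H x) = R x [^]\<^bsub>P\<^esub> ord_mod G H x" using R.hom_nat_pow[OF x] .
  ultimately show ?thesis using x r inv_op_closed2 pow_ord_mod_mem[OF D]
    by (simp add: compatible_at_def)
qed

end

locale compatible_generator = cyclic_extension H G t + P: group P
  for H and G (structure) and t and P (structure) +
  fixes r g
  assumes r_hom: "r \<in> hom (G\<lparr>carrier := H\<rparr>) P"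
    and compatible: "compatible_at G H P r t g"
begin

sublocale r: group_hom "G\<lparr>carrier := H\<rparr>" P r
  using hom_restrict_group_hom[OF is_group P.is_group r_hom] .

lemma r_closed: "h \<in> H \<Longrightarrow> r h \<in> carrier P"
  using r.hom_closed by simp

lemma r_mult: "h \<in> H \<Longrightarrow> h' \<in> H \<Longrightarrow> r (h \<otimes> h') = r h \<otimes>\<^bsub>P\<^esub> r h'"
  using r.hom_mult by simp

lemma g_closed: "g \<in> carrier P"
  using compatible by (simp add: compatible_at_def)

lemma r_generator_pow: "t [^] (k::nat) \<in> H \<Longrightarrow> r (t [^] k) = g [^]\<^bsub>P\<^esub> k"
  using generator_pow_mem compatible
  by (auto simp: compatible_at_def
           intro!: hom_pow_eq_if_pow_ord_mod_eq[OF subgroup_axioms P.is_group r_hom generator_closed])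

lemma r_conj_generator_pow:
  "h \<in> H \<Longrightarrow> r (t [^] (m::nat) \<otimes> h \<otimes> inv (t [^] m)) = g [^]\<^bsub>P\<^esub> m \<otimes>\<^bsub>P\<^esub> r h \<otimes>\<^bsub>P\<^esub> inv\<^bsub>P\<^esub> (g [^]\<^bsub>P\<^esub> m)"
proof (induction m arbitrary: h)
  case 0 thus ?case using mem_carrier r_closed by simp
next
  case (Suc m)
  let ?c = "t \<otimes> h \<otimes> inv t"
  have c: "?c \<in> H" using inv_op_closed2[OF generator_closed Suc.prems] .
  have "t [^] Suc m \<otimes> h \<otimes> inv (t [^] Suc m) = t [^] m \<otimes> ?c \<otimes> inv (t [^] m)"
    using generator_closed mem_carrier[OF Suc.prems] by (simp add: m_assoc inv_mult_group)
  moreover have "r ?c = g \<otimes>\<^bsub>P\<^esub> r h \<otimes>\<^bsub>P\<^esub> inv\<^bsub>P\<^esub> g"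
    using compatible Suc.prems by (simp add: compatible_at_def)
  ultimately show ?case
    using Suc.IH[OF c] g_closed r_closed[OF Suc.prems] by (simp add: P.m_assoc P.inv_mult_group)
qed

lemma coset_value_unique_le:
  assumes "n \<le> m" "h \<in> H" "h' \<in> H" "t [^] n \<otimes> h = t [^] m \<otimes> h'"
  shows "g [^]\<^bsub>P\<^esub> (n::nat) \<otimes>\<^bsub>P\<^esub> r h = g [^]\<^bsub>P\<^esub> m \<otimes>\<^bsub>P\<^esub> r h'"
proof -
  obtain k where m: "m = n + k" using assms(1) le_Suc_ex by blast
  have hc: "h \<in> carrier G" "h' \<in> carrier G" using assms(2,3) mem_carrier by auto
  have "t [^] n \<otimes> h = t [^] n \<otimes> (t [^] k \<otimes> h')"
    using assms(4) generator_closed hc by (simp add: m m_assoc flip: nat_pow_mult)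
  hence h: "h = t [^] k \<otimes> h'" using l_cancel[of "t [^] n" h "t [^] k \<otimes> h'"] generator_closed hc by simp
  hence "t [^] k = h \<otimes> inv h'" using inv_solve_right[of "t [^] k" h h'] generator_closed hc by simp
  hence tk: "t [^] k \<in> H" using assms(2,3) by (simp add: m_closed m_inv_closed)
  have "r h = g [^]\<^bsub>P\<^esub> k \<otimes>\<^bsub>P\<^esub> r h'" using h r_mult[OF tk assms(3)] r_generator_pow[OF tk] by simp
  thus ?thesis using g_closed r_closed[OF assms(3)] by (simp add: m P.m_assoc flip: P.nat_pow_mult)
qed

lemma coset_value_unique:
  assumes "h \<in> H" "h' \<in> H" "t [^] (n::nat) \<otimes> h = t [^] (m::nat) \<otimes> h'"
  shows "g [^]\<^bsub>P\<^esub> n \<otimes>\<^bsub>P\<^esub> r h = g [^]\<^bsub>P\<^esub> m \<otimes>\<^bsub>P\<^esub> r h'"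
  using coset_value_unique_le[OF _ assms] coset_value_unique_le[OF _ assms(2,1) assms(3)[symmetric]]
  by (cases "n \<le> m") auto

definition extension :: "'a \<Rightarrow> 'c" where
  "extension x = (SOME y. \<exists>n::nat. \<exists>h\<in>H. x = t [^] n \<otimes> h \<and> y = g [^]\<^bsub>P\<^esub> n \<otimes>\<^bsub>P\<^esub> r h)"

lemma extension_eq: "h \<in> H \<Longrightarrow> extension (t [^] (n::nat) \<otimes> h) = g [^]\<^bsub>P\<^esub> n \<otimes>\<^bsub>P\<^esub> r h"
  unfolding extension_def
proof (rule someI2)
  assume "h \<in> H"
  thus "\<exists>n'::nat. \<exists>h'\<in>H. t [^] n \<otimes> h = t [^] n' \<otimes> h' \<and> g [^]\<^bsub>P\<^esub> n \<otimes>\<^bsub>P\<^esub> r h = g [^]\<^bsub>P\<^esub> n' \<otimes>\<^bsub>P\<^esub> r h'"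
    by blast
  fix y assume "\<exists>n'::nat. \<exists>h'\<in>H. t [^] n \<otimes> h = t [^] n' \<otimes> h' \<and> y = g [^]\<^bsub>P\<^esub> n' \<otimes>\<^bsub>P\<^esub> r h'"
  with \<open>h \<in> H\<close> show "y = g [^]\<^bsub>P\<^esub> n \<otimes>\<^bsub>P\<^esub> r h" by (metis coset_value_unique)
qed

lemma extension_hom: "extension \<in> hom G P"
proof (rule homI)
  fix x assume "x \<in> carrier G"
  then obtain n :: nat and h where "h \<in> H" "x = t [^] n \<otimes> h" using coset_decomposition by blast
  thus "extension x \<in> carrier P" using extension_eq g_closed r_closed by simp
next
  fix x y assume x: "x \<in> carrier G" and y: "y \<in> carrier G"
  obtain n :: nat and h where h: "h \<in> H" "x = t [^] n \<otimes> h" using coset_decomposition[OF x] by blast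
  obtain m :: nat and h' where h': "h' \<in> H" "y = t [^] m \<otimes> h'" using coset_decomposition[OF y] by blast
  let ?c = "inv (t [^] m) \<otimes> h \<otimes> t [^] m"
  have c: "?c \<in> H" using inv_op_closed1[OF _ h(1)] generator_closed by simp
  have hc: "h \<in> carrier G" "h' \<in> carrier G" "?c \<in> carrier G" using h(1) h'(1) c mem_carrier by auto
  have "t [^] m \<otimes> ?c \<otimes> inv (t [^] m) = h"
    using generator_closed hc by (simp add: m_assoc) (simp add: m_assoc[symmetric])
  hence rh: "r h = g [^]\<^bsub>P\<^esub> m \<otimes>\<^bsub>P\<^esub> r ?c \<otimes>\<^bsub>P\<^esub> inv\<^bsub>P\<^esub> (g [^]\<^bsub>P\<^esub> m)"
    using r_conj_generator_pow[OF c, of m] by simp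
  have "t [^] (n + m) = t [^] n \<otimes> t [^] m" using generator_closed by (simp add: nat_pow_mult)
  hence "x \<otimes> y = t [^] (n + m) \<otimes> (?c \<otimes> h')"
    using generator_closed hc by (simp add: h(2) h'(2) m_assoc mult_inv_cancel_left)
  hence "extension (x \<otimes> y) = g [^]\<^bsub>P\<^esub> (n + m) \<otimes>\<^bsub>P\<^esub> (r ?c \<otimes>\<^bsub>P\<^esub> r h')"
    using extension_eq[OF subgroup.m_closed[OF subgroup_axioms c h'(1)]] r_mult[OF c h'(1)] by simp
  also have "\<dots> = (g [^]\<^bsub>P\<^esub> n \<otimes>\<^bsub>P\<^esub> r h) \<otimes>\<^bsub>P\<^esub> (g [^]\<^bsub>P\<^esub> m \<otimes>\<^bsub>P\<^esub> r h')"
  proof -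
    have "g [^]\<^bsub>P\<^esub> (n + m) = g [^]\<^bsub>P\<^esub> n \<otimes>\<^bsub>P\<^esub> g [^]\<^bsub>P\<^esub> m"
      using g_closed by (simp add: P.nat_pow_mult)
    thus ?thesis using g_closed r_closed[OF c] r_closed[OF h'(1)] by (simp add: rh P.m_assoc P.inv_mult_cancel_left)
  qed
  also have "\<dots> = extension x \<otimes>\<^bsub>P\<^esub> extension y" using extension_eq h h' by simp
  finally show "extension (x \<otimes> y) = extension x \<otimes>\<^bsub>P\<^esub> extension y" .
qed

lemma extension_restrict: "h \<in> H \<Longrightarrow> extension h = r h"
  using extension_eq[of h 0] mem_carrier r_closed by simp

lemma extension_generator: "extension t = g"
  using extension_eq[OF subgroup.one_closed[OF subgroup_axioms], of 1] generator_closed g_closed r.hom_one by simp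

end

context cyclic_extension
begin

lemma extension_exists:
  assumes "group P" "r \<in> hom (G\<lparr>carrier := H\<rparr>) P" "compatible_at G H P r t g"
  shows "\<exists>R\<in>hom G P. (\<forall>h\<in>H. R h = r h) \<and> R t = g"
proof -
  interpret compatible_generator H G t P r g
    by (intro compatible_generator.intro compatible_generator_axioms.intro cyclic_extension_axioms assms)
  show ?thesis using extension_hom extension_restrict extension_generator by blast
qed

lemma extension_iff_compatible:
  assumes "group P" "r \<in> hom (G\<lparr>carrier := H\<rparr>) P"
  shows "(\<exists>R\<in>hom G P. \<forall>h\<in>H. R h = r h) \<longleftrightarrow> (\<forall>x\<in>carrier G. \<exists>g. compatible_at G H P r x g)"
  using extension_exists[OF assms] restriction_compatible_at[OF assms(1)] generator_closed by blast

lemma multiplicative_eq_on_carrier: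
  fixes \<phi> \<psi> :: "'a \<Rightarrow> 'm::monoid_mult"
  assumes \<phi>: "\<forall>x\<in>carrier G. \<forall>y\<in>carrier G. \<phi> (x \<otimes> y) = \<phi> x * \<phi> y"
    and \<psi>: "\<forall>x\<in>carrier G. \<forall>y\<in>carrier G. \<psi> (x \<otimes> y) = \<psi> x * \<psi> y"
    and on_H: "\<forall>h\<in>H. \<phi> h = \<psi> h" and on_t: "\<phi> t = \<psi> t" and x: "x \<in> carrier G"
  shows "\<phi> x = \<psi> x"
proof -
  have pow: "\<phi> (t [^] n) = \<psi> (t [^] n)" for n :: nat
    by (induction n) (use \<phi> \<psi> on_H on_t generator_closed subgroup.one_closed[OF subgroup_axioms] in auto)
  obtain n :: nat and h where "h \<in> H" "x = t [^] n \<otimes> h" using coset_decomposition[OF x] by blast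
  thus ?thesis using \<phi> \<psi> on_H pow generator_closed mem_carrier by simp
qed

lemma extension_with_character_iff_compatible:
  fixes \<delta> :: "'p \<Rightarrow> 'm::monoid_mult" and \<chi> :: "'a \<Rightarrow> 'm"
  assumes P: "group P" and r: "r \<in> hom (G\<lparr>carrier := H\<rparr>) P"
    and \<delta>: "\<forall>a\<in>carrier P. \<forall>b\<in>carrier P. \<delta> (a \<otimes>\<^bsub>P\<^esub> b) = \<delta> a * \<delta> b"
    and \<chi>: "\<forall>x\<in>carrier G. \<forall>y\<in>carrier G. \<chi> (x \<otimes> y) = \<chi> x * \<chi> y"
    and r\<chi>: "\<forall>h\<in>H. \<delta> (r h) = \<chi> h"
  shows "(\<exists>R\<in>hom G P. (\<forall>h\<in>H. R h = r h) \<and> (\<forall>x\<in>carrier G. \<delta> (R x) = \<chi> x))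
     \<longleftrightarrow> (\<forall>x\<in>carrier G. \<exists>g. compatible_at G H P r x g \<and> \<delta> g = \<chi> x)"
proof
  assume "\<exists>R\<in>hom G P. (\<forall>h\<in>H. R h = r h) \<and> (\<forall>x\<in>carrier G. \<delta> (R x) = \<chi> x)"
  thus "\<forall>x\<in>carrier G. \<exists>g. compatible_at G H P r x g \<and> \<delta> g = \<chi> x"
    using restriction_compatible_at[OF P] by blast
next
  assume "\<forall>x\<in>carrier G. \<exists>g. compatible_at G H P r x g \<and> \<delta> g = \<chi> x"
  then obtain g where g: "compatible_at G H P r t g" "\<delta> g = \<chi> t" using generator_closed by blast
  then obtain R where R: "R \<in> hom G P" "\<forall>h\<in>H. R h = r h" "R t = g"
    using extension_exists[OF P r] by blast
  have "\<delta> (R x) = \<chi> x" if "x \<in> carrier G" for x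
    using multiplicative_eq_on_carrier[of "\<lambda>x. \<delta> (R x)" \<chi>] \<delta> \<chi> r\<chi> R g(2) that
    by (simp add: hom_def Pi_iff)
  thus "\<exists>R\<in>hom G P. (\<forall>h\<in>H. R h = r h) \<and> (\<forall>x\<in>carrier G. \<delta> (R x) = \<chi> x)" using R by blast
qed

end

section \<open>The group \<open>PGL\<^sub>2(F\<^sub>p)\<close> and its determinant\<close>

lemma mod_cong_self: "[(x::int) mod m = x] (mod m)"
  by (simp add: cong_def)

lemma mod_lincomb_right: "((a::int) * (x mod m) + b * (y mod m)) mod m = (a * x + b * y) mod m"
  by (metis mod_add_eq mod_mult_right_eq)

lemma mod_lincomb_left: "((x::int) mod m * a + y mod m * b) mod m = (x * a + y * b) mod m"
  by (metis mod_add_eq mod_mult_left_eq)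

lemma msmul_msmul: "msmul p m (msmul p l A) = msmul p (m * l) A"
  by (cases A) (simp add: msmul_def mod_simps algebra_simps)

lemma msmul_cong: "[l = l'] (mod int p) \<Longrightarrow> msmul p l A = msmul p l' A"
  by (cases A) (simp add: msmul_def cong_def mod_mult_left_eq[of l, symmetric] mod_mult_left_eq[of l', symmetric])

lemma msmul_one: "A \<in> gl2 p \<Longrightarrow> msmul p 1 A = A"
  by (cases A) (auto simp: msmul_def gl2_def)

lemma mdet_msmul: "[mdet (msmul p l A) = l * l * mdet A] (mod int p)"
proof (cases A)
  case (fields a b c d)
  have "[mdet (msmul p l A) = (l * a) * (l * d) - (l * b) * (l * c)] (mod int p)"
    unfolding fields msmul_def mdet_def by (simp; intro cong_diff cong_mult mod_cong_self)
  thus ?thesis by (simp add: fields mdet_def algebra_simps)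
qed

lemma mdet_mmul: "[mdet (mmul p A B) = mdet A * mdet B] (mod int p)"
proof (cases A; cases B)
  fix a b c d e f g h assume AB: "A = (a, b, c, d)" "B = (e, f, g, h)"
  have "[mdet (mmul p A B) = (a * e + b * g) * (c * f + d * h) - (a * f + b * h) * (c * e + d * g)] (mod int p)"
    unfolding AB mmul_def mdet_def by (simp; intro cong_diff cong_mult mod_cong_self)
  thus ?thesis by (simp add: AB mdet_def algebra_simps)
qed

lemma mmul_assoc: "mmul p (mmul p A B) C = mmul p A (mmul p B C)"
  by (cases A; cases B; cases C)
    (simp only: mmul_def split mod_lincomb_right mod_lincomb_left; simp add: algebra_simps)

lemma mmul_msmul: "mmul p (msmul p l A) (msmul p m B) = msmul p (l * m) (mmul p A B)"
  by (cases A; cases B)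
    (simp only: mmul_def msmul_def split mod_lincomb_right mod_lincomb_left;
     simp only: mult.assoc[symmetric] mod_mult_right_eq; simp add: algebra_simps)

definition madj :: "nat \<Rightarrow> mat2 \<Rightarrow> mat2" where
  "madj p A = (case A of (a, b, c, d) \<Rightarrow> (d mod int p, (- b) mod int p, (- c) mod int p, a mod int p))"

lemma mmul_madj: "mmul p (madj p A) A = msmul p (mdet A) (1, 0, 0, 1)"
  by (cases A)
    (simp only: madj_def mmul_def msmul_def mdet_def prod.case mod_lincomb_right mod_lincomb_left;
     simp add: algebra_simps)

lemma mdet_madj: "[mdet (madj p A) = mdet A] (mod int p)"
proof (cases A)
  case (fields a b c d)
  have "[mdet (madj p A) = d * a - (- b) * (- c)] (mod int p)"
    unfolding fields madj_def mdet_def prod.case by (intro cong_diff cong_mult mod_cong_self)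
  thus ?thesis by (simp add: fields mdet_def algebra_simps)
qed

lemma mmul_identity: "A \<in> gl2 p \<Longrightarrow> mmul p (1, 0, 0, 1) A = A"
  by (cases A) (auto simp: mmul_def gl2_def)

locale odd_prime =
  fixes p :: nat
  assumes prime: "prime p" and odd: "2 < p"
begin

lemma not_dvd_mult: "\<not> int p dvd x \<Longrightarrow> \<not> int p dvd y \<Longrightarrow> \<not> int p dvd x * y"
  using prime by (simp add: prime_dvd_mult_iff)

lemma inverse_mod_exists:
  assumes "\<not> int p dvd l"
  obtains m where "[m * l = 1] (mod int p)" "\<not> int p dvd m"
proof -
  have "coprime l (int p)"
    using prime_imp_coprime[of "int p" l] prime assms by (simp add: ac_simps)
  then obtain m where m: "[l * m = 1] (mod int p)" using cong_solve_coprime_int by blast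
  moreover have "\<not> int p dvd m"
    using m prime cong_dvd_iff[OF m] by (auto simp: prime_int_iff)
  ultimately show ?thesis using that by (simp add: ac_simps)
qed

lemma mod_eq_self_iff: "x mod int p = x \<longleftrightarrow> x \<in> {0..<int p}"
  using prime_gt_0_nat[OF prime]
  by (metis atLeastLessThan_iff mod_pos_pos_trivial pos_mod_bound pos_mod_sign of_nat_0_less_iff)

lemma gl2_iff_mdet:
  "(a, b, c, d) \<in> gl2 p \<longleftrightarrow> a mod int p = a \<and> b mod int p = b \<and> c mod int p = c \<and> d mod int p = d
     \<and> \<not> int p dvd mdet (a, b, c, d)"
  by (simp add: gl2_def mdet_def mod_eq_self_iff)

lemma msmul_gl2: "A \<in> gl2 p \<Longrightarrow> \<not> int p dvd l \<Longrightarrow> msmul p l A \<in> gl2 p"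
  using not_dvd_mult cong_dvd_iff[OF mdet_msmul, of p l A]
  by (cases A) (simp add: gl2_iff_mdet msmul_def)

lemma mmul_gl2: "A \<in> gl2 p \<Longrightarrow> B \<in> gl2 p \<Longrightarrow> mmul p A B \<in> gl2 p"
  using not_dvd_mult cong_dvd_iff[OF mdet_mmul, of p A B]
  by (cases A; cases B) (simp add: gl2_iff_mdet mmul_def)

lemma madj_gl2: "A \<in> gl2 p \<Longrightarrow> madj p A \<in> gl2 p"
  using cong_dvd_iff[OF mdet_madj, of p A]
  by (cases A) (simp add: gl2_iff_mdet madj_def)

lemma identity_gl2: "(1, 0, 0, 1) \<in> gl2 p"
  using prime_gt_1_nat[OF prime] by (simp add: gl2_def)

lemma pcls_self: "A \<in> gl2 p \<Longrightarrow> A \<in> pcls p A"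
  unfolding pcls_def using msmul_one[of A p] prime_gt_1_nat[OF prime] by (auto intro!: exI[of _ 1])

lemma pcls_subset:
  assumes B: "B \<in> pcls p A" shows "pcls p B \<subseteq> pcls p A"
proof
  fix C assume "C \<in> pcls p B"
  then obtain l' where l': "\<not> int p dvd l'" "C = msmul p l' B" "C \<in> gl2 p" unfolding pcls_def by auto
  obtain l where l: "\<not> int p dvd l" "B = msmul p l A" using B unfolding pcls_def by auto
  have "C = msmul p (l' * l) A" using l l' by (simp add: msmul_msmul)
  thus "C \<in> pcls p A" using l' l not_dvd_mult unfolding pcls_def by blast
qed

lemma pcls_eq: assumes A: "A \<in> gl2 p" and B: "B \<in> pcls p A" shows "pcls p B = pcls p A"
proof
  show "pcls p B \<subseteq> pcls p A" by (rule pcls_subset[OF B])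
  obtain l where l: "\<not> int p dvd l" "B = msmul p l A" using B unfolding pcls_def by auto
  obtain m where m: "[m * l = 1] (mod int p)" "\<not> int p dvd m" using inverse_mod_exists[OF l(1)] .
  have "msmul p m B = A" using l msmul_cong[OF m(1)] msmul_one[OF A] by (simp add: msmul_msmul)
  hence "A \<in> pcls p B" using m(2) A unfolding pcls_def by auto
  thus "pcls p A \<subseteq> pcls p B" by (rule pcls_subset)
qed

lemma pcls_msmul: "A \<in> gl2 p \<Longrightarrow> \<not> int p dvd l \<Longrightarrow> pcls p (msmul p l A) = pcls p A"
  by (rule pcls_eq) (auto simp: pcls_def msmul_gl2)

lemma some_in_pcls:
  assumes "A \<in> gl2 p"
  obtains l where "\<not> int p dvd l" "(SOME M. M \<in> pcls p A) = msmul p l A"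
  using someI[of "\<lambda>M. M \<in> pcls p A", OF pcls_self[OF assms]] that unfolding pcls_def by auto

lemma mult_PGL2_pcls:
  assumes A: "A \<in> gl2 p" and B: "B \<in> gl2 p"
  shows "pcls p A \<otimes>\<^bsub>PGL2 p\<^esub> pcls p B = pcls p (mmul p A B)"
proof -
  obtain l where l: "\<not> int p dvd l" "(SOME M. M \<in> pcls p A) = msmul p l A" using some_in_pcls[OF A] .
  obtain m where m: "\<not> int p dvd m" "(SOME M. M \<in> pcls p B) = msmul p m B" using some_in_pcls[OF B] .
  have "pcls p A \<otimes>\<^bsub>PGL2 p\<^esub> pcls p B = pcls p (msmul p (l * m) (mmul p A B))"
    by (simp add: PGL2_def l m mmul_msmul)
  also have "\<dots> = pcls p (mmul p A B)" using pcls_msmul[OF mmul_gl2[OF A B]] not_dvd_mult[OF l(1) m(1)] .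
  finally show ?thesis .
qed

lemma carrier_PGL2: "carrier (PGL2 p) = pcls p ` gl2 p"
  by (simp add: PGL2_def)

lemma one_PGL2: "\<one>\<^bsub>PGL2 p\<^esub> = pcls p (1, 0, 0, 1)"
  by (simp add: PGL2_def)

lemma group_PGL2: "group (PGL2 p)"
proof (rule groupI)
  fix x y assume "x \<in> carrier (PGL2 p)" "y \<in> carrier (PGL2 p)"
  thus "x \<otimes>\<^bsub>PGL2 p\<^esub> y \<in> carrier (PGL2 p)" by (auto simp: carrier_PGL2 mult_PGL2_pcls mmul_gl2)
next
  show "\<one>\<^bsub>PGL2 p\<^esub> \<in> carrier (PGL2 p)" using identity_gl2 by (simp add: one_PGL2 carrier_PGL2)
next
  fix x y z assume "x \<in> carrier (PGL2 p)" "y \<in> carrier (PGL2 p)" "z \<in> carrier (PGL2 p)"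
  thus "x \<otimes>\<^bsub>PGL2 p\<^esub> y \<otimes>\<^bsub>PGL2 p\<^esub> z = x \<otimes>\<^bsub>PGL2 p\<^esub> (y \<otimes>\<^bsub>PGL2 p\<^esub> z)"
    by (auto simp: carrier_PGL2 mult_PGL2_pcls mmul_gl2 mmul_assoc)
next
  fix x assume "x \<in> carrier (PGL2 p)"
  thus "\<one>\<^bsub>PGL2 p\<^esub> \<otimes>\<^bsub>PGL2 p\<^esub> x = x"
    by (auto simp: carrier_PGL2 one_PGL2 mult_PGL2_pcls identity_gl2 mmul_identity)
next
  fix x assume "x \<in> carrier (PGL2 p)"
  then obtain A where A: "A \<in> gl2 p" "x = pcls p A" by (auto simp: carrier_PGL2)
  have "\<not> int p dvd mdet A" using A(1) by (cases A) (simp add: gl2_iff_mdet)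
  hence "pcls p (madj p A) \<otimes>\<^bsub>PGL2 p\<^esub> x = \<one>\<^bsub>PGL2 p\<^esub>"
    using A pcls_msmul[OF identity_gl2] by (simp add: mult_PGL2_pcls madj_gl2 mmul_madj one_PGL2)
  thus "\<exists>y\<in>carrier (PGL2 p). y \<otimes>\<^bsub>PGL2 p\<^esub> x = \<one>\<^bsub>PGL2 p\<^esub>"
    using madj_gl2[OF A(1)] by (auto simp: carrier_PGL2)
qed

lemma Legendre_cong:
  assumes "[a = b] (mod int p)" shows "Legendre a (int p) = Legendre b (int p)"
proof -
  have "[a = 0] (mod int p) \<longleftrightarrow> [b = 0] (mod int p)"
    using assms cong_sym cong_trans by blast
  moreover have "QuadRes (int p) a \<longleftrightarrow> QuadRes (int p) b"
    unfolding QuadRes_def using assms cong_sym cong_trans by blast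
  ultimately show ?thesis by (simp add: Legendre_def)
qed

lemma sign_eq_if_cong:
  assumes "x \<in> {-1, 0, 1::int}" "y \<in> {-1, 0, 1}" "[x = y] (mod int p)" shows "x = y"
proof (rule ccontr)
  assume "x \<noteq> y"
  moreover have "int p dvd x - y" using assms(3) by (simp add: cong_iff_dvd_diff)
  ultimately have "\<bar>int p\<bar> \<le> \<bar>x - y\<bar>" by (intro dvd_imp_le_int) auto
  moreover have "\<bar>x - y\<bar> \<le> 2" using assms(1,2) by auto
  ultimately show False using odd by simp
qed

lemma Legendre_mult: "Legendre (a * b) (int p) = Legendre a (int p) * Legendre b (int p)"
proof -
  have euler: "[Legendre x (int p) = x ^ ((p - 1) div 2)] (mod int p)" for x
    using euler_criterion[OF prime odd] by simp
  have "[Legendre (a * b) (int p) = Legendre a (int p) * Legendre b (int p)] (mod int p)"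
    using euler[of "a * b"] cong_mult[OF euler[of a] euler[of b]]
    by (simp add: power_mult_distrib) (meson cong_sym cong_trans)
  thus ?thesis by (rule sign_eq_if_cong[rotated 2]) (auto simp: Legendre_def)
qed

lemma Legendre_square: "\<not> int p dvd l \<Longrightarrow> Legendre (l * l) (int p) = 1"
  using not_dvd_mult[of l l] unfolding Legendre_def QuadRes_def
  by (auto simp: cong_0_iff power2_eq_square intro: exI[of _ l])

lemma pdet_pcls: assumes A: "A \<in> gl2 p" shows "pdet p (pcls p A) = Legendre (mdet A) (int p)"
proof -
  obtain l where l: "\<not> int p dvd l" "(SOME M. M \<in> pcls p A) = msmul p l A" using some_in_pcls[OF A] .
  have "pdet p (pcls p A) = Legendre (l * l * mdet A) (int p)"
    using Legendre_cong[OF mdet_msmul] l(2) by (simp add: pdet_def)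
  thus ?thesis using Legendre_square[OF l(1)] by (simp add: Legendre_mult)
qed

lemma pdet_mult:
  "\<forall>U\<in>carrier (PGL2 p). \<forall>V\<in>carrier (PGL2 p). pdet p (U \<otimes>\<^bsub>PGL2 p\<^esub> V) = pdet p U * pdet p V"
  using Legendre_cong[OF mdet_mmul]
  by (auto simp: carrier_PGL2 mult_PGL2_pcls pdet_pcls mmul_gl2 Legendre_mult)

end

section \<open>Absolute Galois groups\<close>

lemma field_aut_comp: "field_aut \<sigma> \<Longrightarrow> field_aut \<tau> \<Longrightarrow> field_aut (\<sigma> \<circ> \<tau>)"
  by (simp add: field_aut_def bij_comp)

lemma field_aut_inv:
  assumes \<sigma>: "field_aut \<sigma>" shows "field_aut (inv_into UNIV \<sigma>)"
proof -
  have b: "bij \<sigma>" using \<sigma> by (simp add: field_aut_def)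
  have inv: "inv_into UNIV \<sigma> y = x \<longleftrightarrow> \<sigma> x = y" for x y
    using b by (metis bij_inv_eq_iff)
  have "\<sigma> (inv_into UNIV \<sigma> x) = x" for x using inv by blast
  thus ?thesis using \<sigma> bij_imp_bij_inv[OF b] by (simp add: field_aut_def inv)
qed

lemma absGal_comp: "\<sigma> \<in> absGal K \<Longrightarrow> \<tau> \<in> absGal K \<Longrightarrow> \<sigma> \<circ> \<tau> \<in> absGal K"
  by (simp add: absGal_def field_aut_comp)

lemma absGal_inv:
  assumes "\<sigma> \<in> absGal K" shows "inv_into UNIV \<sigma> \<in> absGal K"
proof -
  have "inj \<sigma>" using assms by (simp add: absGal_def field_aut_def bij_is_inj)
  thus ?thesis using assms field_aut_inv by (auto simp: absGal_def intro: inv_f_eq)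
qed

lemma absGal_antimono: "K \<subseteq> L \<Longrightarrow> absGal L \<subseteq> absGal K"
  by (auto simp: absGal_def)

lemma carrier_GalGrp [simp]: "carrier (GalGrp K) = absGal K"
  and mult_GalGrp [simp]: "\<sigma> \<otimes>\<^bsub>GalGrp K\<^esub> \<tau> = \<sigma> \<circ> \<tau>"
  and one_GalGrp [simp]: "\<one>\<^bsub>GalGrp K\<^esub> = id"
  by (simp_all add: GalGrp_def)

lemma GalGrp_carrier_update: "(GalGrp K)\<lparr>carrier := absGal L\<rparr> = GalGrp L"
  by (simp add: GalGrp_def)

lemma inv_into_comp_absGal: "\<sigma> \<in> absGal K \<Longrightarrow> inv_into UNIV \<sigma> \<circ> \<sigma> = id"
  by (auto simp: absGal_def field_aut_def bij_is_inj)

lemma group_GalGrp: "group (GalGrp K)"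
proof (rule groupI)
  fix \<sigma> assume "\<sigma> \<in> carrier (GalGrp K)"
  thus "\<exists>\<tau>\<in>carrier (GalGrp K). \<tau> \<otimes>\<^bsub>GalGrp K\<^esub> \<sigma> = \<one>\<^bsub>GalGrp K\<^esub>"
    using absGal_inv inv_into_comp_absGal by fastforce
qed (auto simp: absGal_def field_aut_def comp_assoc bij_comp)

lemma inv_GalGrp: "\<sigma> \<in> absGal K \<Longrightarrow> inv\<^bsub>GalGrp K\<^esub> \<sigma> = inv_into UNIV \<sigma>"
  using group.inv_equality[OF group_GalGrp, of K "inv_into UNIV \<sigma>" \<sigma>]
  by (simp add: inv_into_comp_absGal absGal_inv)

lemma pow_GalGrp: "\<sigma> [^]\<^bsub>GalGrp K\<^esub> (n::nat) = \<sigma> ^^ n"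
  by (induction n) (simp_all add: funpow_Suc_right del: funpow.simps)

lemma ord_mod_GalGrp: "ord_mod (GalGrp K) (absGal L) \<tau> = dtau L \<tau>"
  by (simp add: ord_mod_def dtau_def pow_GalGrp)

lemma absGal_conj_closed:
  assumes "\<tau> \<in> absGal K" "\<sigma> \<in> absGal L" "\<tau> ` L = L"
  shows "\<tau> \<circ> \<sigma> \<circ> inv_into UNIV \<tau> \<in> absGal L"
proof -
  have \<tau>: "field_aut \<tau>" "inj \<tau>" and \<sigma>: "field_aut \<sigma>" "\<forall>x\<in>L. \<sigma> x = x"
    using assms(1,2) by (auto simp: absGal_def field_aut_def bij_is_inj)
  have "(\<tau> \<circ> \<sigma> \<circ> inv_into UNIV \<tau>) y = y" if "y \<in> L" for y
  proof -
    obtain x where "x \<in> L" "y = \<tau> x" using assms(3) \<open>y \<in> L\<close> by blast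
    thus ?thesis using inv_f_f[OF \<tau>(2), of x] \<sigma>(2) by simp
  qed
  moreover have "field_aut (\<tau> \<circ> \<sigma> \<circ> inv_into UNIV \<tau>)"
    using \<tau>(1) \<sigma>(1) by (intro field_aut_comp field_aut_inv)
  ultimately show ?thesis by (simp add: absGal_def)
qed

lemma absGal_normal:
  assumes "K \<subseteq> L" "\<forall>\<tau>\<in>absGal K. \<tau> ` L = L"
  shows "absGal L \<lhd> GalGrp K"
proof -
  interpret group "GalGrp K" by (rule group_GalGrp)
  have "subgroup (absGal L) (GalGrp K)"
  proof (rule subgroupI)
    show "absGal L \<subseteq> carrier (GalGrp K)" using absGal_antimono[OF assms(1)] by simp
    show "absGal L \<noteq> {}" by (auto simp: absGal_def field_aut_def intro!: exI[of _ id])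
    fix \<sigma> \<sigma>' assume "\<sigma> \<in> absGal L" "\<sigma>' \<in> absGal L"
    thus "inv\<^bsub>GalGrp K\<^esub> \<sigma> \<in> absGal L" "\<sigma> \<otimes>\<^bsub>GalGrp K\<^esub> \<sigma>' \<in> absGal L"
      using absGal_antimono[OF assms(1)] by (auto simp: inv_GalGrp absGal_inv absGal_comp)
  qed
  moreover have "\<forall>\<tau>\<in>carrier (GalGrp K). \<forall>\<sigma>\<in>absGal L. \<tau> \<otimes>\<^bsub>GalGrp K\<^esub> \<sigma> \<otimes>\<^bsub>GalGrp K\<^esub> inv\<^bsub>GalGrp K\<^esub> \<tau> \<in> absGal L"
    using assms(2) absGal_conj_closed by (simp add: inv_GalGrp)
  ultimately show ?thesis using normal_inv_iff by blast
qed

lemma cyclic_galois_ext_cyclic_extension: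
  assumes "cyclic_galois_ext L K"
  shows "\<exists>t. cyclic_extension (absGal L) (GalGrp K) t"
proof -
  obtain t where t: "t \<in> absGal K" and cyc: "\<forall>\<sigma>\<in>absGal K. \<exists>n. \<forall>x\<in>L. \<sigma> x = (t ^^ n) x"
    using assms by (auto simp: cyclic_galois_ext_def)
  have "\<exists>n::nat. \<exists>h\<in>absGal L. \<sigma> = t ^^ n \<circ> h" if \<sigma>: "\<sigma> \<in> absGal K" for \<sigma>
  proof -
    obtain n where n: "\<forall>x\<in>L. \<sigma> x = (t ^^ n) x" using cyc \<sigma> by blast
    have tn: "t ^^ n \<in> absGal K" using monoid.nat_pow_closed[OF group.is_monoid[OF group_GalGrp], of t K n] t by (simp add: pow_GalGrp)
    hence "inj (t ^^ n)" "surj (t ^^ n)" by (auto simp: absGal_def field_aut_def bij_is_inj bij_is_surj)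
    hence "inv_into UNIV (t ^^ n) \<circ> \<sigma> \<in> absGal L" "\<sigma> = t ^^ n \<circ> (inv_into UNIV (t ^^ n) \<circ> \<sigma>)"
      using n absGal_comp[OF absGal_inv[OF tn] \<sigma>] by (auto simp: absGal_def surj_f_inv_f)
    thus ?thesis by blast
  qed
  moreover have "absGal L \<lhd> GalGrp K" using assms absGal_normal by (simp add: cyclic_galois_ext_def)
  ultimately show ?thesis using t
    by (intro exI[of _ t] cyclic_extension.intro cyclic_extension_axioms.intro) (auto simp: pow_GalGrp)
qed

lemma compatible_wrt_iff:
  "compatible_wrt p L K r \<longleftrightarrow>
     (\<forall>\<tau>\<in>carrier (GalGrp K). \<exists>g. compatible_at (GalGrp K) (absGal L) (PGL2 p) r \<tau> g)"
  by (simp add: compatible_wrt_def compatible_at_def inv_GalGrp ord_mod_GalGrp pow_GalGrp Bex_def)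

lemma strongly_compatible_wrt_iff:
  "strongly_compatible_wrt p L K r \<longleftrightarrow>
     (\<forall>\<tau>\<in>carrier (GalGrp K). \<exists>g. compatible_at (GalGrp K) (absGal L) (PGL2 p) r \<tau> g
        \<and> pdet p g = cyc_pr p \<tau>)"
  by (simp add: strongly_compatible_wrt_def compatible_at_def inv_GalGrp ord_mod_GalGrp pow_GalGrp Bex_def conj_ac)

section \<open>The cyclotomic character\<close>

context odd_prime
begin

lemma field_aut_power: "field_aut \<sigma> \<Longrightarrow> \<sigma> (x ^ n) = \<sigma> x ^ n"
  by (induction n) (simp_all add: field_aut_def)

lemma nontrivial_root_of_unity_exists: "\<exists>z::qbar. z ^ p = 1 \<and> z \<noteq> 1"
proof -
  obtain z :: qbar where z: "(\<Sum>k\<le>p - 1. (\<lambda>_. 1::qbar) k * z ^ k) = 0"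
    using alg_closed[of "p - 1" "\<lambda>_. 1::qbar"] odd by auto
  have "{..p - 1} = {..<p}" using odd by auto
  hence sum: "(\<Sum>k<p. z ^ k) = 0" using z by simp
  hence "z ^ p = 1" using power_diff_1_eq[of z p] by simp
  moreover have "z \<noteq> 1" using sum odd by auto
  ultimately show ?thesis by blast
qed

definition zeta :: qbar where
  "zeta = (SOME z. z ^ p = 1 \<and> z \<noteq> 1)"

lemma zeta: "zeta ^ p = 1" "zeta \<noteq> 1"
  using someI_ex[OF nontrivial_root_of_unity_exists] by (simp_all add: zeta_def)

lemma dvd_if_zeta_pow_eq_one: "zeta ^ i = 1 \<Longrightarrow> p dvd i"
proof (rule ccontr)
  assume i: "zeta ^ i = 1" and "\<not> p dvd i"
  hence "i \<noteq> 0" "coprime i p"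
    using prime_imp_coprime[OF prime] by (metis dvd_0_right, simp add: coprime_commute)
  then obtain a b where ab: "i * a = p * b + 1" using bezout_nat[of i p] by auto
  have "zeta ^ (i * a) = 1" using i by (simp add: power_mult)
  moreover have "zeta ^ (p * b + 1) = zeta" using zeta(1) by (simp add: power_add power_mult)
  ultimately show False using ab zeta(2) by simp
qed

lemma cong_if_zeta_pow_eq: "zeta ^ a = zeta ^ b \<Longrightarrow> [a = b] (mod p)"
proof (induction a b rule: linorder_wlog)
  case (le a b)
  have "zeta \<noteq> 0" using zeta(1) odd by (auto simp: zero_power)
  moreover have "zeta ^ b = zeta ^ a * zeta ^ (b - a)" using le(1) by (simp flip: power_add)
  ultimately have "zeta ^ (b - a) = 1" using le(2) by simp
  hence "[b = a] (mod p)" using le(1) dvd_if_zeta_pow_eq_one by (simp add: cong_altdef_nat)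
  thus ?case by (rule cong_sym)
qed (simp add: cong_sym_eq)

lemma root_of_unity_is_zeta_pow:
  assumes "(w::qbar) ^ p = 1" shows "\<exists>k<p. w = zeta ^ k"
proof -
  let ?roots = "{x::qbar. x ^ p = 1}"
  define q :: "qbar poly" where "q = monom 1 p - 1"
  have q: "q \<noteq> 0" "degree q \<le> p" "{x. poly q x = 0} = ?roots"
    using odd by (auto simp: q_def poly_monom coeff_monom degree_monom_le
                        intro: order.trans[OF degree_diff_le_max] dest: arg_cong[of _ _ "\<lambda>q. coeff q p"])
  have inj: "inj_on (\<lambda>k. zeta ^ k) {..<p}"
    unfolding inj_on_def using cong_if_zeta_pow_eq cong_less_modulus_unique_nat by (metis lessThan_iff)
  have sub: "(\<lambda>k. zeta ^ k) ` {..<p} \<subseteq> ?roots"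
    using zeta(1) by (auto simp flip: power_mult simp: mult.commute[of _ p] power_mult)
  have "card ?roots \<le> p" using card_poly_roots_bound[OF q(1)] q(2,3) by simp
  moreover have "finite ?roots" using poly_roots_finite[OF q(1)] q(3) by simp
  ultimately have "(\<lambda>k. zeta ^ k) ` {..<p} = ?roots"
    using card_subset_eq[OF _ sub] card_image[OF inj] card_mono[OF _ sub] by fastforce
  thus ?thesis using assms by auto
qed

lemma cyclotomic_exponent_exists:
  assumes \<sigma>: "field_aut \<sigma>" shows "\<exists>a::nat. \<forall>\<zeta>::qbar. \<zeta> ^ p = 1 \<longrightarrow> \<sigma> \<zeta> = \<zeta> ^ a"
proof -
  have "\<sigma> zeta ^ p = 1" using field_aut_power[OF \<sigma>, of zeta p] zeta(1) \<sigma> by (simp add: field_aut_def)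
  then obtain a where a: "\<sigma> zeta = zeta ^ a" using root_of_unity_is_zeta_pow by blast
  have "\<sigma> w = w ^ a" if w: "w ^ p = 1" for w
  proof -
    obtain k where "w = zeta ^ k" using root_of_unity_is_zeta_pow[OF w] by blast
    thus ?thesis using a field_aut_power[OF \<sigma>] by (simp flip: power_mult add: mult.commute)
  qed
  thus ?thesis by blast
qed

text \<open>The exponent chosen by \<open>cyc_pr\<close> is only determined modulo \<open>p\<close>; comparing the action
  on the primitive root \<open>zeta\<close> pins it down in that residue class.\<close>

lemma cyc_pr_mult:
  assumes \<sigma>: "field_aut \<sigma>" and \<tau>: "field_aut \<tau>"
  shows "cyc_pr p (\<sigma> \<circ> \<tau>) = cyc_pr p \<sigma> * cyc_pr p \<tau>"
proof -
  define e where "e \<rho> = (SOME a::nat. \<forall>\<zeta>::qbar. \<zeta> ^ p = 1 \<longrightarrow> \<rho> \<zeta> = \<zeta> ^ a)" for \<rho>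
  have e: "\<rho> zeta = zeta ^ e \<rho>" if "field_aut \<rho>" for \<rho>
    using someI_ex[OF cyclotomic_exponent_exists[OF that]] zeta(1) unfolding e_def by blast
  have "zeta ^ e (\<sigma> \<circ> \<tau>) = zeta ^ (e \<sigma> * e \<tau>)"
    using e[OF field_aut_comp[OF \<sigma> \<tau>]] e[OF \<sigma>] e[OF \<tau>] field_aut_power[OF \<sigma>] by (simp add: power_mult)
  hence "[int (e (\<sigma> \<circ> \<tau>)) = int (e \<sigma>) * int (e \<tau>)] (mod int p)"
    using cong_if_zeta_pow_eq by (simp add: cong_int_iff flip: of_nat_mult)
  hence "Legendre (int (e (\<sigma> \<circ> \<tau>))) (int p) = Legendre (int (e \<sigma>)) (int p) * Legendre (int (e \<tau>)) (int p)"
    by (simp only: Legendre_cong Legendre_mult)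
  thus ?thesis by (simp only: cyc_pr_def e_def)
qed

end

theorem lemma1:
  fixes p :: nat and K L :: "qbar set" and r :: "(qbar \<Rightarrow> qbar) \<Rightarrow> mat2 set"
  assumes "prime p" and "p \<ge> 7"
    and "cyclic_galois_ext L K"
    and "r \<in> hom (GalGrp L) (PGL2 p)"
    and "galois_continuous p L r"
    and "cyc_det p L r"
  shows "((\<exists>R \<in> hom (GalGrp K) (PGL2 p). \<forall>\<sigma>\<in>absGal L. R \<sigma> = r \<sigma>)
           \<longleftrightarrow> compatible_wrt p L K r)
       \<and> ((\<exists>R \<in> hom (GalGrp K) (PGL2 p). (\<forall>\<sigma>\<in>absGal L. R \<sigma> = r \<sigma>) \<and> cyc_det p K R)
           \<longleftrightarrow> strongly_compatible_wrt p L K r)"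
proof -
  interpret odd_prime p using assms(1,2) by unfold_locales simp_all
  obtain t where "cyclic_extension (absGal L) (GalGrp K) t"
    using cyclic_galois_ext_cyclic_extension[OF assms(3)] by blast
  then interpret cyclic_extension "absGal L" "GalGrp K" t .
  have r: "r \<in> hom ((GalGrp K)\<lparr>carrier := absGal L\<rparr>) (PGL2 p)"
    using assms(4) by (simp add: GalGrp_carrier_update)
  have cyc: "\<forall>\<sigma>\<in>carrier (GalGrp K). \<forall>\<tau>\<in>carrier (GalGrp K). cyc_pr p (\<sigma> \<otimes>\<^bsub>GalGrp K\<^esub> \<tau>) = cyc_pr p \<sigma> * cyc_pr p \<tau>"
    by (simp add: absGal_def cyc_pr_mult)
  have "\<forall>\<sigma>\<in>absGal L. pdet p (r \<sigma>) = cyc_pr p \<sigma>"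
    using assms(6) by (simp add: cyc_det_def)
  thus ?thesis
    using extension_iff_compatible[OF group_PGL2 r]
      extension_with_character_iff_compatible[OF group_PGL2 r pdet_mult cyc]
    by (simp add: compatible_wrt_iff strongly_compatible_wrt_iff cyc_det_def)
qed

end
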